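(* Let $\mathcal{A}\in\mathbb{R}^{l\times m\times n}$ and let $U_0\in\mathbb{R}^{l\times r_1}$, $V_0\in\mathbb{R}^{m\times r_2}$, $W_0\in\mathbb{R}^{n\times r_3}$ have orthonormal columns. Perform one block-Krylov step in each mode starting from $(U_0,V_0,W_0)$, giving $(U_1,V_1,W_1)$, and set \[ \mathcal{H}_0=\mathcal{A}\cdot(U_0,V_0,W_0),\quad \mathcal{H}^1_1=\mathcal{A}\cdot(U_1,V_0,W_0),\quad \mathcal{H}^2_1=\mathcal{A}\cdot(U_0,V_1,W_0),\quad \mathcal{H}^3_1=\mathcal{A}\cdot(U_0,V_0,W_1). \] Then the norm of the Grassmann gradient of $\Phi(U,V,W)=\|\mathcal{A}\cdot(U,V,W)\|^2$ at $(U_0,V_0,W_0)$ satisfies \[ \|\nabla(U_0,V_0,W_0)\|^2=\|\langle\mathcal{H}_0,\mathcal{H}^1_1\rangle_{-1}\|^2+\|\langle\mathcal{H}_0,\mathcal{H}^2_1\rangle_{-2}\|^2+\|\langle\mathcal{H}_0,\mathcal{H}^3_1\rangle_{-3}\|^2 . \]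
   Context: For $\mathcal{A}\in\mathbb{R}^{l\times m\times n}$ and matrices $U,V,W$ of compatible row dimensions, $\mathcal{A}\cdot(U,V,W)$ is the tensor with entries $\sum_{\alpha,\beta,\gamma}u_{\alpha i}v_{\beta j}w_{\gamma k}a_{\alpha\beta\gamma}$; $\mathcal{A}\cdot_{2,3}(V,W)$ is the analogous product in modes 2 and 3 only. Norms are Frobenius norms. Partial contractions: $\langle\mathcal{X},\mathcal{Y}\rangle_{-1}$ is the matrix with entries $\sum_{j,k}x_{ijk}y_{i'jk}$ (contraction over modes 2 and 3), and $\langle\cdot,\cdot\rangle_{-2}$, $\langle\cdot,\cdot\rangle_{-3}$ are defined analogously (contraction over all modes except mode 2, resp. mode 3). The mode-1 block-Krylov step from $(U_0,V_0,W_0)$ produces $U_1$ with orthonormal columns orthogonal to $U_0$ via a thin QR decomposition $(I-U_0U_0^T)\,\mathtt{unfold}_1(\mathcal{A}\cdot_{2,3}(V_0,W_0))=U_1H$, where $\mathtt{unfold}_1$ arranges the mode-1 fibers as columns; the mode-2 and mode-3 steps producing $V_1,W_1$ are analogous. The Grassmann gradient of $\Phi$ at $(U,V,W)$ (maximization over the product of Grassmann manifolds of the column spaces of $U,V,W$) is, in local coordinates, $(\langle\mathcal{F}^1_\perp,\mathcal{F}\rangle_{-1},\langle\mathcal{F}^2_\perp,\mathcal{F}\rangle_{-2},\langle\mathcal{F}^3_\perp,\mathcal{F}\rangle_{-3})$, where $\mathcal{F}=\mathcal{A}\cdot(U,V,W)$, $\mathcal{F}^1_\perp=\mathcal{A}\cdot(U_\perp,V,W)$,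 $\mathcal{F}^2_\perp=\mathcal{A}\cdot(U,V_\perp,W)$, $\mathcal{F}^3_\perp=\mathcal{A}\cdot(U,V,W_\perp)$, with $(U\,U_\perp)$ etc. square orthogonal matrices; its squared norm is the sum of squared Frobenius norms of the three components. *)

theory Defs
  imports Complex_Main
begin

text \<open>A matrix is a function nat => nat => real, a third-order tensor is a
function nat => nat => nat => real; all dimensions are carried explicitly and every sum
ranges over the stated index bounds, so values outside the bounds are irrelevant.\<close>

type_synonym mat = "nat \<Rightarrow> nat \<Rightarrow> real"
type_synonym tensor = "nat \<Rightarrow> nat \<Rightarrow> nat \<Rightarrow> real"

definition orthonormal_cols :: "nat \<Rightarrow> nat \<Rightarrow> mat \<Rightarrow> bool" where
  "orthonormal_cols p q U \<longleftrightarrow>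
     (\<forall>i<q. \<forall>j<q. (\<Sum>a<p. U a i * U a j) = (if i = j then 1 else 0))"

definition hcat :: "nat \<Rightarrow> mat \<Rightarrow> mat \<Rightarrow> mat" where
  "hcat r U Up = (\<lambda>i j. if j < r then U i j else Up i (j - r))"

definition orth_complement :: "nat \<Rightarrow> nat \<Rightarrow> mat \<Rightarrow> mat \<Rightarrow> bool" where
  "orth_complement p r U Up \<longleftrightarrow> r \<le> p \<and> orthonormal_cols p p (hcat r U Up)"

definition ttm :: "nat \<Rightarrow> nat \<Rightarrow> nat \<Rightarrow> tensor \<Rightarrow> mat \<Rightarrow> mat \<Rightarrow> mat \<Rightarrow> tensor" where
  "ttm l m n A U V W = (\<lambda>i j k. \<Sum>\<alpha><l. \<Sum>\<beta><m. \<Sum>\<gamma><n.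
      U \<alpha> i * V \<beta> j * W \<gamma> k * A \<alpha> \<beta> \<gamma>)"

definition ttm23 :: "nat \<Rightarrow> nat \<Rightarrow> tensor \<Rightarrow> mat \<Rightarrow> mat \<Rightarrow> tensor" where
  "ttm23 m n A V W = (\<lambda>\<alpha> j k. \<Sum>\<beta><m. \<Sum>\<gamma><n. V \<beta> j * W \<gamma> k * A \<alpha> \<beta> \<gamma>)"

definition ttm13 :: "nat \<Rightarrow> nat \<Rightarrow> tensor \<Rightarrow> mat \<Rightarrow> mat \<Rightarrow> tensor" where
  "ttm13 l n A U W = (\<lambda>i \<beta> k. \<Sum>\<alpha><l. \<Sum>\<gamma><n. U \<alpha> i * W \<gamma> k * A \<alpha> \<beta> \<gamma>)"

definition ttm12 :: "nat \<Rightarrow> nat \<Rightarrow> tensor \<Rightarrow> mat \<Rightarrow> mat \<Rightarrow> tensor" where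
  "ttm12 l m A U V = (\<lambda>i j \<gamma>. \<Sum>\<alpha><l. \<Sum>\<beta><m. U \<alpha> i * V \<beta> j * A \<alpha> \<beta> \<gamma>)"

text \<open>For X of size d1 x d2 x d3:
  unfold1 has d1 rows and d2*d3 columns, column index j + d2*k;
  unfold2 has d2 rows and d1*d3 columns, column index i + d1*k;
  unfold3 has d3 rows and d1*d2 columns, column index i + d1*j.\<close>
definition unfold1 :: "nat \<Rightarrow> tensor \<Rightarrow> mat" where
  "unfold1 d2 X = (\<lambda>i c. X i (c mod d2) (c div d2))"
definition unfold2 :: "nat \<Rightarrow> tensor \<Rightarrow> mat" where
  "unfold2 d1 X = (\<lambda>j c. X (c mod d1) j (c div d1))"
definition unfold3 :: "nat \<Rightarrow> tensor \<Rightarrow> mat" where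
  "unfold3 d1 X = (\<lambda>k c. X (c mod d1) (c div d1) k)"

definition proj_perp :: "nat \<Rightarrow> nat \<Rightarrow> mat \<Rightarrow> mat \<Rightarrow> mat" where
  "proj_perp p r U M = (\<lambda>i c. M i c - (\<Sum>a<p. (\<Sum>t<r. U i t * U a t) * M a c))"

definition thin_qr_perp :: "nat \<Rightarrow> nat \<Rightarrow> mat \<Rightarrow> nat \<Rightarrow> mat \<Rightarrow> nat \<Rightarrow> mat \<Rightarrow> mat \<Rightarrow> bool" where
  "thin_qr_perp p r U0 nc Y q Q H \<longleftrightarrow>
     orthonormal_cols p q Q \<and>
     (\<forall>s<r. \<forall>t<q. (\<Sum>a<p. U0 a s * Q a t) = 0) \<and>
     (\<forall>t<q. \<forall>c<nc. c < t \<longrightarrow> H t c = 0) \<and>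
     (\<forall>i<p. \<forall>c<nc. Y i c = (\<Sum>t<q. Q i t * H t c))"

definition krylov1 :: "nat \<Rightarrow> nat \<Rightarrow> nat \<Rightarrow> tensor \<Rightarrow> nat \<Rightarrow> nat \<Rightarrow> nat \<Rightarrow>
    mat \<Rightarrow> mat \<Rightarrow> mat \<Rightarrow> nat \<Rightarrow> mat \<Rightarrow> bool" where
  "krylov1 l m n A r1 r2 r3 U0 V0 W0 q U1 \<longleftrightarrow> (\<exists>H.
     thin_qr_perp l r1 U0 (r2 * r3) (proj_perp l r1 U0 (unfold1 r2 (ttm23 m n A V0 W0))) q U1 H)"

definition krylov2 :: "nat \<Rightarrow> nat \<Rightarrow> nat \<Rightarrow> tensor \<Rightarrow> nat \<Rightarrow> nat \<Rightarrow> nat \<Rightarrow>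
    mat \<Rightarrow> mat \<Rightarrow> mat \<Rightarrow> nat \<Rightarrow> mat \<Rightarrow> bool" where
  "krylov2 l m n A r1 r2 r3 U0 V0 W0 q V1 \<longleftrightarrow> (\<exists>H.
     thin_qr_perp m r2 V0 (r1 * r3) (proj_perp m r2 V0 (unfold2 r1 (ttm13 l n A U0 W0))) q V1 H)"

definition krylov3 :: "nat \<Rightarrow> nat \<Rightarrow> nat \<Rightarrow> tensor \<Rightarrow> nat \<Rightarrow> nat \<Rightarrow> nat \<Rightarrow>
    mat \<Rightarrow> mat \<Rightarrow> mat \<Rightarrow> nat \<Rightarrow> mat \<Rightarrow> bool" where
  "krylov3 l m n A r1 r2 r3 U0 V0 W0 q W1 \<longleftrightarrow> (\<exists>H.
     thin_qr_perp n r3 W0 (r1 * r2) (proj_perp n r3 W0 (unfold3 r1 (ttm12 l m A U0 V0))) q W1 H)"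

definition contr1 :: "nat \<Rightarrow> nat \<Rightarrow> tensor \<Rightarrow> tensor \<Rightarrow> mat" where
  "contr1 d2 d3 X Y = (\<lambda>i i'. \<Sum>j<d2. \<Sum>k<d3. X i j k * Y i' j k)"
definition contr2 :: "nat \<Rightarrow> nat \<Rightarrow> tensor \<Rightarrow> tensor \<Rightarrow> mat" where
  "contr2 d1 d3 X Y = (\<lambda>j j'. \<Sum>i<d1. \<Sum>k<d3. X i j k * Y i j' k)"
definition contr3 :: "nat \<Rightarrow> nat \<Rightarrow> tensor \<Rightarrow> tensor \<Rightarrow> mat" where
  "contr3 d1 d2 X Y = (\<lambda>k k'. \<Sum>i<d1. \<Sum>j<d2. X i j k * Y i j k')"

definition fro2 :: "nat \<Rightarrow> nat \<Rightarrow> mat \<Rightarrow> real" where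
  "fro2 p q M = (\<Sum>i<p. \<Sum>j<q. (M i j)\<^sup>2)"

text \<open>Squared norm of the Grassmann gradient of Phi at (U,V,W), in local coordinates
  given by the complements Up, Vp, Wp.\<close>
definition grass_grad_norm2 :: "nat \<Rightarrow> nat \<Rightarrow> nat \<Rightarrow> tensor \<Rightarrow> nat \<Rightarrow> nat \<Rightarrow> nat \<Rightarrow>
    mat \<Rightarrow> mat \<Rightarrow> mat \<Rightarrow> mat \<Rightarrow> mat \<Rightarrow> mat \<Rightarrow> real" where
  "grass_grad_norm2 l m n A r1 r2 r3 U V W Up Vp Wp =
     (let F = ttm l m n A U V W;
          F1 = ttm l m n A Up V W;
          F2 = ttm l m n A U Vp W;
          F3 = ttm l m n A U V Wp
      in fro2 (l - r1) r1 (contr1 r2 r3 F1 F)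
       + fro2 (m - r2) r2 (contr2 r1 r3 F2 F)
       + fro2 (n - r3) r3 (contr3 r1 r2 F3 F))"

end

theory Submission
  imports "Jordan_Normal_Form.Determinant" Defs
begin

(* In mode 1 let M be the unfolding of A.(I,V0,W0), so that the gradient component is
   Up^T X with X = M M^T U0, while the Krylov term is U1^T X. Since (U0 Up) is orthogonal,
   each column x of X satisfies |Up^T x| = |(I - U0 U0^T) x|. By the Krylov step,
   (I - U0 U0^T) X = U1 H M^T U0 lies in the column space of U1, whose columns are
   orthonormal and orthogonal to U0; hence |(I - U0 U0^T) x| = |U1^T x|.
   Modes 2 and 3 are mode 1 for a transposed tensor. *)

lemma orthonormal_cols_square_rows:
  assumes "orthonormal_cols p p Q" "a < p" "b < p"
  shows "(\<Sum>j<p. Q a j * Q b j) = (if a = b then 1 else 0)"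
proof -
  define Qt where "Qt = mat p p (\<lambda>(i, j). Q j i)"
  define Qm where "Qm = mat p p (\<lambda>(i, j). Q i j)"
  have carrier: "Qt \<in> carrier_mat p p" "Qm \<in> carrier_mat p p"
    by (auto simp: Qt_def Qm_def)
  have "Qt * Qm = 1\<^sub>m p"
  proof (rule eq_matI)
    fix i j assume "i < dim_row (1\<^sub>m p :: real Matrix.mat)" "j < dim_col (1\<^sub>m p :: real Matrix.mat)"
    then have "i < p" "j < p" by auto
    then show "(Qt * Qm) $$ (i, j) = 1\<^sub>m p $$ (i, j)"
      using assms(1) unfolding orthonormal_cols_def
      by (simp add: Qt_def Qm_def scalar_prod_def lessThan_atLeast0)
  qed (auto simp: Qt_def Qm_def)
  then have "Qm * Qt = 1\<^sub>m p"
    using mat_mult_left_right_inverse[OF carrier] by blast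
  then have "(Qm * Qt) $$ (a, b) = 1\<^sub>m p $$ (a, b)"
    by simp
  then show ?thesis
    using assms(2,3) by (simp add: Qt_def Qm_def scalar_prod_def lessThan_atLeast0)
qed

lemma sum_mult_matmul_assoc:
  fixes v z :: "nat \<Rightarrow> real" and M :: mat
  shows "(\<Sum>c<N. (\<Sum>a<p. v a * M a c) * z c) = (\<Sum>a<p. v a * (\<Sum>c<N. M a c * z c))"
  by (simp add: sum_distrib_left sum_distrib_right mult_ac sum.swap[of _ "{..<N}"])

lemma sum_square_lincomb_isometry:
  fixes Q :: mat and x :: "nat \<Rightarrow> real"
  assumes "\<And>a b. a < p \<Longrightarrow> b < p \<Longrightarrow> (\<Sum>j<q. Q a j * Q b j) = (if a = b then 1 else 0)"
  shows "(\<Sum>j<q. (\<Sum>a<p. Q a j * x a)\<^sup>2) = (\<Sum>a<p. (x a)\<^sup>2)"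
proof -
  have "(\<Sum>j<q. (\<Sum>a<p. Q a j * x a)\<^sup>2) = (\<Sum>a<p. \<Sum>b<p. x a * x b * (\<Sum>j<q. Q a j * Q b j))"
    by (simp add: power2_eq_square sum_product sum_distrib_left mult_ac sum.swap[of _ "{..<q}"])
  also have "\<dots> = (\<Sum>a<p. \<Sum>b<p. if a = b then x a * x b else 0)"
    using assms by (intro sum.cong refl) auto
  finally show ?thesis
    by (simp add: power2_eq_square)
qed

lemma orthonormal_cols_inner_lincomb:
  assumes "orthonormal_cols p q U" "t < q"
  shows "(\<Sum>a<p. U a t * (\<Sum>s<q. U a s * w s)) = w t"
proof -
  have "(\<Sum>a<p. U a t * (\<Sum>s<q. U a s * w s)) = (\<Sum>s<q. (\<Sum>a<p. U a t * U a s) * w s)"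
    by (rule sum_mult_matmul_assoc[symmetric])
  also have "\<dots> = (\<Sum>s<q. if t = s then w s else 0)"
    using assms unfolding orthonormal_cols_def by (intro sum.cong refl) auto
  finally show ?thesis
    using assms(2) by simp
qed

lemma orth_complement_cols_orthogonal:
  assumes "orth_complement p r U Up" "s < r" "i < p - r"
  shows "(\<Sum>a<p. U a s * Up a i) = 0"
proof -
  have "orthonormal_cols p p (hcat r U Up)"
    using assms(1) by (simp add: orth_complement_def)
  then have "(\<Sum>a<p. hcat r U Up a s * hcat r U Up a (r + i)) = 0"
    using assms unfolding orthonormal_cols_def by auto
  then show ?thesis
    using assms(2) by (simp add: hcat_def)
qed

lemma orth_complement_parseval:
  assumes "orth_complement p r U Up"
  shows "(\<Sum>i<p - r. (\<Sum>a<p. Up a i * x a)\<^sup>2) + (\<Sum>s<r. (\<Sum>a<p. U a s * x a)\<^sup>2)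
           = (\<Sum>a<p. (x a)\<^sup>2)"
proof -
  define Q where "Q = hcat r U Up"
  define g where "g j = (\<Sum>a<p. Q a j * x a)\<^sup>2" for j
  have "r \<le> p" and "orthonormal_cols p p Q"
    using assms by (auto simp: orth_complement_def Q_def)
  have "(\<Sum>a<p. (x a)\<^sup>2) = (\<Sum>j<p. g j)"
    unfolding g_def
    by (rule sym, rule sum_square_lincomb_isometry)
       (use orthonormal_cols_square_rows[OF \<open>orthonormal_cols p p Q\<close>] in auto)
  also have "\<dots> = sum g {0..<r} + sum g {r..<p}"
    using \<open>r \<le> p\<close> by (simp add: sum.atLeastLessThan_concat lessThan_atLeast0)
  also have "\<dots> = (\<Sum>s<r. g s) + (\<Sum>i<p - r. g (r + i))"
    by (simp add: sum.atLeastLessThan_shift_0[of g r p] lessThan_atLeast0)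
  finally show ?thesis
    by (simp add: g_def Q_def hcat_def)
qed

lemma inner_proj_perp:
  "(\<Sum>a<p. v a * proj_perp p r U M a c)
     = (\<Sum>a<p. v a * M a c) - (\<Sum>s<r. (\<Sum>a<p. U a s * v a) * (\<Sum>a<p. U a s * M a c))"
proof -
  have "(\<Sum>a<p. v a * (\<Sum>b<p. (\<Sum>s<r. U a s * U b s) * M b c))
      = (\<Sum>a<p. \<Sum>s<r. \<Sum>b<p. (U a s * v a) * (U b s * M b c))"
    by (simp add: sum_distrib_left sum_distrib_right mult_ac sum.swap[of _ "{..<r}"])
  also have "\<dots> = (\<Sum>s<r. (\<Sum>a<p. U a s * v a) * (\<Sum>b<p. U b s * M b c))"
    by (simp add: sum_product sum.swap[of _ "{..<p}" "{..<r}"])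
  finally show ?thesis
    by (simp add: proj_perp_def right_diff_distrib sum_subtractf)
qed

lemma inner_proj_perp_orthogonal:
  assumes "\<forall>s<r. (\<Sum>a<p. U a s * v a) = 0"
  shows "(\<Sum>a<p. v a * proj_perp p r U M a c) = (\<Sum>a<p. v a * M a c)"
  using assms by (simp add: inner_proj_perp)

lemma inner_cols_proj_perp_eq_0:
  assumes "orthonormal_cols p r U" "s < r"
  shows "(\<Sum>a<p. U a s * proj_perp p r U M a c) = 0"
proof -
  have "(\<Sum>s'<r. (\<Sum>a<p. U a s' * U a s) * (\<Sum>a<p. U a s' * M a c))
      = (\<Sum>s'<r. if s' = s then (\<Sum>a<p. U a s' * M a c) else 0)"
    using assms unfolding orthonormal_cols_def by (intro sum.cong refl) auto
  then show ?thesis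
    using assms(2) by (simp add: inner_proj_perp)
qed

lemma proj_perp_mult_right:
  "proj_perp p r U (\<lambda>a i. \<Sum>c<N. M a c * Z c i) a i = (\<Sum>c<N. proj_perp p r U M a c * Z c i)"
  by (simp add: proj_perp_def left_diff_distrib sum_subtractf sum_mult_matmul_assoc)

lemma complement_coords_eq_krylov_coords:
  assumes U0: "orthonormal_cols p r U0" and Up: "orth_complement p r U0 Up"
    and U1: "orthonormal_cols p q U1"
    and U1_perp: "\<forall>s<r. \<forall>t<q. (\<Sum>a<p. U0 a s * U1 a t) = 0"
    and span: "\<forall>a<p. proj_perp p r U0 X a c = (\<Sum>t<q. U1 a t * w t)"
  shows "(\<Sum>i<p - r. (\<Sum>a<p. Up a i * X a c)\<^sup>2) = (\<Sum>t<q. (\<Sum>a<p. U1 a t * X a c)\<^sup>2)"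
proof -
  define y where "y a = proj_perp p r U0 X a c" for a
  have "(\<Sum>i<p - r. (\<Sum>a<p. Up a i * X a c)\<^sup>2) = (\<Sum>i<p - r. (\<Sum>a<p. Up a i * y a)\<^sup>2)"
    unfolding y_def
    by (intro sum.cong refl arg_cong[where f = power2] inner_proj_perp_orthogonal[symmetric])
       (use orth_complement_cols_orthogonal[OF Up] in auto)
  also have "\<dots> = (\<Sum>a<p. (y a)\<^sup>2)"
    using orth_complement_parseval[OF Up, of y] inner_cols_proj_perp_eq_0[OF U0] by (simp add: y_def)
  also have "\<dots> = (\<Sum>a<p. (\<Sum>t<q. U1 a t * w t)\<^sup>2)"
    using span by (simp add: y_def)
  also have "\<dots> = (\<Sum>t<q. (w t)\<^sup>2)"
    by (rule sum_square_lincomb_isometry[where Q = "\<lambda>t a. U1 a t"])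
       (use U1 in \<open>auto simp: orthonormal_cols_def\<close>)
  also have "\<dots> = (\<Sum>t<q. (\<Sum>a<p. U1 a t * y a)\<^sup>2)"
    using span orthonormal_cols_inner_lincomb[OF U1] by (simp add: y_def)
  also have "\<dots> = (\<Sum>t<q. (\<Sum>a<p. U1 a t * X a c)\<^sup>2)"
    unfolding y_def
    by (intro sum.cong refl arg_cong[where f = power2] inner_proj_perp_orthogonal)
       (use U1_perp in auto)
  finally show ?thesis .
qed

lemma fro2_complement_gram_eq_krylov_gram:
  assumes U0: "orthonormal_cols p r U0" and Up: "orth_complement p r U0 Up"
    and qr: "thin_qr_perp p r U0 N (proj_perp p r U0 M) q U1 H"
  shows "fro2 (p - r) r (\<lambda>i s. \<Sum>c<N. (\<Sum>a<p. Up a i * M a c) * (\<Sum>a<p. U0 a s * M a c))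
       = fro2 r q (\<lambda>s t. \<Sum>c<N. (\<Sum>a<p. U0 a s * M a c) * (\<Sum>a<p. U1 a t * M a c))"
proof -
  define Z where "Z c s = (\<Sum>a<p. U0 a s * M a c)" for c s
  define X where "X a s = (\<Sum>c<N. M a c * Z c s)" for a s
  have U1: "orthonormal_cols p q U1"
    and U1_perp: "\<forall>s<r. \<forall>t<q. (\<Sum>a<p. U0 a s * U1 a t) = 0"
    and M_span: "\<forall>a<p. \<forall>c<N. proj_perp p r U0 M a c = (\<Sum>t<q. U1 a t * H t c)"
    using qr by (auto simp: thin_qr_perp_def)
  have X_span: "proj_perp p r U0 X a s = (\<Sum>t<q. U1 a t * (\<Sum>c<N. H t c * Z c s))"
    if "a < p" for a s
  proof -
    have "proj_perp p r U0 X a s = (\<Sum>c<N. (\<Sum>t<q. U1 a t * H t c) * Z c s)"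
      unfolding X_def proj_perp_mult_right using M_span that by simp
    then show ?thesis
      by (simp add: sum_mult_matmul_assoc)
  qed
  have coords: "(\<Sum>i<p - r. (\<Sum>a<p. Up a i * X a s)\<^sup>2) = (\<Sum>t<q. (\<Sum>a<p. U1 a t * X a s)\<^sup>2)" for s
    by (rule complement_coords_eq_krylov_coords[OF U0 Up U1 U1_perp]) (use X_span in auto)
  have "fro2 (p - r) r (\<lambda>i s. \<Sum>c<N. (\<Sum>a<p. Up a i * M a c) * Z c s)
      = (\<Sum>i<p - r. \<Sum>s<r. (\<Sum>a<p. Up a i * X a s)\<^sup>2)"
    unfolding fro2_def X_def sum_mult_matmul_assoc ..
  also have "\<dots> = (\<Sum>s<r. \<Sum>t<q. (\<Sum>a<p. U1 a t * X a s)\<^sup>2)"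
    by (subst sum.swap) (simp add: coords)
  also have "\<dots> = fro2 r q (\<lambda>s t. \<Sum>c<N. Z c s * (\<Sum>a<p. U1 a t * M a c))"
    unfolding fro2_def X_def mult.commute[of "Z _ _"] sum_mult_matmul_assoc ..
  finally show ?thesis
    by (simp add: Z_def)
qed

lemma sum_sum_eq_sum_div_mod:
  fixes f :: "nat \<Rightarrow> nat \<Rightarrow> 'a::comm_monoid_add"
  shows "(\<Sum>j<d2. \<Sum>k<d3. f j k) = (\<Sum>c<d2 * d3. f (c mod d2) (c div d2))"
proof -
  have "(\<Sum>c<d2 * d3. f (c mod d2) (c div d2))
      = (\<Sum>k<d3. \<Sum>c\<in>{k * d2..<k * d2 + d2}. f (c mod d2) (c div d2))"
    by (simp add: sum.nat_group mult.commute)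
  also have "\<dots> = (\<Sum>k<d3. \<Sum>j<d2. f j k)"
  proof (rule sum.cong[OF refl])
    fix k
    show "(\<Sum>c\<in>{k * d2..<k * d2 + d2}. f (c mod d2) (c div d2)) = (\<Sum>j<d2. f j k)"
      using sum.atLeastLessThan_shift_bounds[of "\<lambda>c. f (c mod d2) (c div d2)" 0 "k * d2" d2]
      by (simp add: lessThan_atLeast0 comp_def add.commute)
  qed
  finally show ?thesis
    by (simp add: sum.swap[of _ "{..<d2}"])
qed

definition ttm1 :: "nat \<Rightarrow> mat \<Rightarrow> tensor \<Rightarrow> tensor" where
  "ttm1 p U B = (\<lambda>i j k. \<Sum>\<alpha><p. U \<alpha> i * B \<alpha> j k)"

lemma contr1_ttm1_eq_unfold1:
  "contr1 d2 d3 (ttm1 p V B) (ttm1 p W B)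
     = (\<lambda>i i'. \<Sum>c<d2 * d3. (\<Sum>a<p. V a i * unfold1 d2 B a c) * (\<Sum>a<p. W a i' * unfold1 d2 B a c))"
  unfolding contr1_def ttm1_def unfold1_def by (simp add: sum_sum_eq_sum_div_mod)

lemma fro2_contr1_complement_eq_krylov:
  assumes "orthonormal_cols p r U0" "orth_complement p r U0 Up"
    and "thin_qr_perp p r U0 (d2 * d3) (proj_perp p r U0 (unfold1 d2 B)) q U1 H"
  shows "fro2 (p - r) r (contr1 d2 d3 (ttm1 p Up B) (ttm1 p U0 B))
       = fro2 r q (contr1 d2 d3 (ttm1 p U0 B) (ttm1 p U1 B))"
  unfolding contr1_ttm1_eq_unfold1 using fro2_complement_gram_eq_krylov_gram[OF assms] .

lemma ttm_eq_ttm1_mode1: "ttm l m n A U V W = ttm1 l U (ttm23 m n A V W)"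
  unfolding ttm_def ttm1_def ttm23_def by (simp add: sum_distrib_left mult_ac)

lemma ttm_eq_ttm1_mode2: "ttm l m n A U V W i j k = ttm1 m V (\<lambda>\<beta> i k. ttm13 l n A U W i \<beta> k) j i k"
  unfolding ttm_def ttm1_def ttm13_def by (simp add: sum_distrib_left mult_ac sum.swap[of _ "{..<m}"])

lemma ttm_eq_ttm1_mode3: "ttm l m n A U V W i j k = ttm1 n W (\<lambda>\<gamma> i j. ttm12 l m A U V i j \<gamma>) k i j"
  unfolding ttm_def ttm1_def ttm12_def by (simp add: sum_distrib_left mult_ac sum.swap[of _ "{..<n}"])

lemma contr2_eq_contr1: "contr2 d1 d3 X Y = contr1 d1 d3 (\<lambda>j i k. X i j k) (\<lambda>j i k. Y i j k)"
  by (simp add: contr1_def contr2_def)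

lemma contr3_eq_contr1: "contr3 d1 d2 X Y = contr1 d1 d2 (\<lambda>k i j. X i j k) (\<lambda>k i j. Y i j k)"
  by (simp add: contr1_def contr3_def)

lemma unfold2_eq_unfold1: "unfold2 d1 X = unfold1 d1 (\<lambda>j i k. X i j k)"
  by (simp add: unfold1_def unfold2_def)

lemma unfold3_eq_unfold1: "unfold3 d1 X = unfold1 d1 (\<lambda>k i j. X i j k)"
  by (simp add: unfold1_def unfold3_def)

theorem proposition4p2:
  fixes l m n r1 r2 r3 q1 q2 q3 :: nat
    and A :: tensor
    and U0 V0 W0 U1 V1 W1 Up Vp Wp :: mat
  assumes "orthonormal_cols l r1 U0"
    and "orthonormal_cols m r2 V0"
    and "orthonormal_cols n r3 W0"
    and "krylov1 l m n A r1 r2 r3 U0 V0 W0 q1 U1"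
    and "krylov2 l m n A r1 r2 r3 U0 V0 W0 q2 V1"
    and "krylov3 l m n A r1 r2 r3 U0 V0 W0 q3 W1"
    and "orth_complement l r1 U0 Up"
    and "orth_complement m r2 V0 Vp"
    and "orth_complement n r3 W0 Wp"
  shows "grass_grad_norm2 l m n A r1 r2 r3 U0 V0 W0 Up Vp Wp =
           fro2 r1 q1 (contr1 r2 r3 (ttm l m n A U0 V0 W0) (ttm l m n A U1 V0 W0))
         + fro2 r2 q2 (contr2 r1 r3 (ttm l m n A U0 V0 W0) (ttm l m n A U0 V1 W0))
         + fro2 r3 q3 (contr3 r1 r2 (ttm l m n A U0 V0 W0) (ttm l m n A U0 V0 W1))"
proof -
  have "fro2 (l - r1) r1 (contr1 r2 r3 (ttm l m n A Up V0 W0) (ttm l m n A U0 V0 W0))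
      = fro2 r1 q1 (contr1 r2 r3 (ttm l m n A U0 V0 W0) (ttm l m n A U1 V0 W0))"
    using assms(4) unfolding krylov1_def ttm_eq_ttm1_mode1
    by (blast intro: fro2_contr1_complement_eq_krylov[OF assms(1,7)])
  moreover have "fro2 (m - r2) r2 (contr2 r1 r3 (ttm l m n A U0 Vp W0) (ttm l m n A U0 V0 W0))
      = fro2 r2 q2 (contr2 r1 r3 (ttm l m n A U0 V0 W0) (ttm l m n A U0 V1 W0))"
    using assms(5) unfolding krylov2_def unfold2_eq_unfold1 contr2_eq_contr1 ttm_eq_ttm1_mode2
    by (blast intro: fro2_contr1_complement_eq_krylov[OF assms(2,8)])
  moreover have "fro2 (n - r3) r3 (contr3 r1 r2 (ttm l m n A U0 V0 Wp) (ttm l m n A U0 V0 W0))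
      = fro2 r3 q3 (contr3 r1 r2 (ttm l m n A U0 V0 W0) (ttm l m n A U0 V0 W1))"
    using assms(6) unfolding krylov3_def unfold3_eq_unfold1 contr3_eq_contr1 ttm_eq_ttm1_mode3
    by (blast intro: fro2_contr1_complement_eq_krylov[OF assms(3,9)])
  ultimately show ?thesis
    by (simp add: grass_grad_norm2_def Let_def)
qed

end
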